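(* There exists an NJ-symmetric ring $R$ such that the polynomial ring $R[x]$ is not NJ-symmetric.
   Context: Rings are associative with identity. $N(S)$ is the set of nilpotent elements, $J(S)$ the Jacobson radical of a ring $S$. $S$ is NJ-symmetric if for all $a,b,c\in S$, $abc\in N(S)$ implies $bac\in J(S)$. *)

theory Defs
  imports "HOL-Algebra.UnivPoly"
begin

definition nilpotents :: "('a, 'm) ring_scheme \<Rightarrow> 'a set" where
  "nilpotents R = {a \<in> carrier R. \<exists>n::nat. a [^]\<^bsub>R\<^esub> n = \<zero>\<^bsub>R\<^esub>}"

definition left_ideal :: "'a set \<Rightarrow> ('a, 'm) ring_scheme \<Rightarrow> bool" where
  "left_ideal I R \<longleftrightarrow> additive_subgroup I R \<and>
     (\<forall>r \<in> carrier R. \<forall>a \<in> I. r \<otimes>\<^bsub>R\<^esub> a \<in> I)"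

definition maximal_left_ideal :: "'a set \<Rightarrow> ('a, 'm) ring_scheme \<Rightarrow> bool" where
  "maximal_left_ideal I R \<longleftrightarrow> left_ideal I R \<and> I \<noteq> carrier R \<and>
     (\<forall>K. left_ideal K R \<and> I \<subseteq> K \<and> K \<noteq> carrier R \<longrightarrow> K = I)"

definition jacobson_radical :: "('a, 'm) ring_scheme \<Rightarrow> 'a set" where
  "jacobson_radical R = carrier R \<inter> \<Inter> {I. maximal_left_ideal I R}"

definition NJ_symmetric :: "('a, 'm) ring_scheme \<Rightarrow> bool" where
  "NJ_symmetric R \<longleftrightarrow> (\<forall>a \<in> carrier R. \<forall>b \<in> carrier R. \<forall>c \<in> carrier R.
     a \<otimes>\<^bsub>R\<^esub> b \<otimes>\<^bsub>R\<^esub> c \<in> nilpotents R \<longrightarrow>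
     b \<otimes>\<^bsub>R\<^esub> a \<otimes>\<^bsub>R\<^esub> c \<in> jacobson_radical R)"

end

theory Submission
  imports Defs "HOL-Library.Countable" "HOL-Algebra.Weak_Morphisms" "HOL-Algebra.Subrings"
begin

(* A local ring R, i.e. one whose non-units form an ideal m, is NJ-symmetric: nilpotent
   elements are non-units, so abc nilpotent puts one of a, b, c into m (m is completely prime,
   since a product of units is a unit), hence bac lies in m, and m is contained in J(R).
   In R[x], on the other hand, a constant y can only lie in J(R[x]) if 1 - yx is left
   invertible, and its only candidate inverse is the power series sum of y^k x^k, which is
   a polynomial only if y is nilpotent.  So R[x] is not NJ-symmetric as soon as R contains
   a, b, c with abc = 0 and bac not nilpotent.  Such a local ring is given by the 2x2
   matrices over Z_(2) whose lower left entry is even and whose diagonal entries are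
   congruent mod 2, with a = E12, b = 2 E11, c = 2 E21: here abc = 0 and bac = 4 E11. *)

section \<open>Left ideals and the Jacobson radical\<close>

context ring
begin

lemma left_idealI:
  assumes "I \<subseteq> carrier R" "I \<noteq> {}"
    and "\<And>x y. x \<in> I \<Longrightarrow> y \<in> I \<Longrightarrow> x \<oplus> y \<in> I"
    and "\<And>r x. r \<in> carrier R \<Longrightarrow> x \<in> I \<Longrightarrow> r \<otimes> x \<in> I"
  shows "left_ideal I R"
proof -
  have "\<ominus> x \<in> I" if "x \<in> I" for x
  proof -
    have "\<ominus> x = (\<ominus> \<one>) \<otimes> x" using that assms(1) l_minus by auto
    then show ?thesis using assms(4) that by simp
  qed
  then have "subgroup I (add_monoid R)"
    using assms by (intro add.subgroupI) auto
  then show ?thesis unfolding left_ideal_def using assms(4) additive_subgroupI by blast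
qed

lemma left_idealD:
  assumes "left_ideal I R"
  shows "I \<subseteq> carrier R" "\<zero> \<in> I" "\<And>x y. x \<in> I \<Longrightarrow> y \<in> I \<Longrightarrow> x \<oplus> y \<in> I"
    and "\<And>r x. r \<in> carrier R \<Longrightarrow> x \<in> I \<Longrightarrow> r \<otimes> x \<in> I"
  using assms unfolding left_ideal_def
  by (auto simp: additive_subgroup.a_subset additive_subgroup.zero_closed
      additive_subgroup.a_closed)

lemma left_ideal_one_imp_carrier:
  assumes "left_ideal I R" "\<one> \<in> I" shows "I = carrier R"
proof -
  have "r \<in> I" if "r \<in> carrier R" for r
    using left_idealD(4)[OF assms(1) that assms(2)] that by simp
  then show ?thesis using left_idealD(1)[OF assms(1)] by blast
qed

lemma ideal_of_left_ideal:
  assumes "left_ideal I R" and "\<And>a x. a \<in> I \<Longrightarrow> x \<in> carrier R \<Longrightarrow> a \<otimes> x \<in> I"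
  shows "ideal I R"
  using assms unfolding left_ideal_def
  by (intro idealI ring_axioms additive_subgroup.a_subgroup) auto

lemma left_ideal_principal:
  assumes "w \<in> carrier R"
  shows "left_ideal {q \<otimes> w | q. q \<in> carrier R} R"
proof (rule left_idealI)
  show "{q \<otimes> w | q. q \<in> carrier R} \<noteq> {}" by blast
  fix x y assume "x \<in> {q \<otimes> w | q. q \<in> carrier R}" "y \<in> {q \<otimes> w | q. q \<in> carrier R}"
  then obtain p q where "x = p \<otimes> w" "y = q \<otimes> w" "p \<in> carrier R" "q \<in> carrier R" by blast
  then show "x \<oplus> y \<in> {q \<otimes> w | q. q \<in> carrier R}"
    using assms by (intro CollectI exI[of _ "p \<oplus> q"]) (simp add: l_distr)
next
  fix r x assume "r \<in> carrier R" "x \<in> {q \<otimes> w | q. q \<in> carrier R}"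
  then obtain q where "x = q \<otimes> w" "r \<in> carrier R" "q \<in> carrier R" by blast
  then show "r \<otimes> x \<in> {q \<otimes> w | q. q \<in> carrier R}"
    using assms by (intro CollectI exI[of _ "r \<otimes> q"]) (simp add: m_assoc)
qed (use assms in auto)

lemma left_ideal_add_principal:
  assumes "left_ideal I R" "x \<in> carrier R"
  shows "left_ideal {k \<oplus> r \<otimes> x | k r. k \<in> I \<and> r \<in> carrier R} R"
proof (rule left_idealI)
  note I = left_idealD[OF assms(1)]
  show "{k \<oplus> r \<otimes> x | k r. k \<in> I \<and> r \<in> carrier R} \<subseteq> carrier R"
    using I(1) assms(2) by auto
  show "{k \<oplus> r \<otimes> x | k r. k \<in> I \<and> r \<in> carrier R} \<noteq> {}" using I(2) by blast
  fix a b assume "a \<in> {k \<oplus> r \<otimes> x | k r. k \<in> I \<and> r \<in> carrier R}"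
    "b \<in> {k \<oplus> r \<otimes> x | k r. k \<in> I \<and> r \<in> carrier R}"
  then obtain k1 r1 k2 r2 where "a = k1 \<oplus> r1 \<otimes> x" "b = k2 \<oplus> r2 \<otimes> x"
    and kr: "k1 \<in> I" "k2 \<in> I" "r1 \<in> carrier R" "r2 \<in> carrier R" by blast
  moreover have "k1 \<in> carrier R" "k2 \<in> carrier R" using I(1) kr by auto
  ultimately have "a \<oplus> b = (k1 \<oplus> k2) \<oplus> (r1 \<oplus> r2) \<otimes> x"
    using assms(2) by (simp add: l_distr a_ac)
  moreover have "k1 \<oplus> k2 \<in> I" "r1 \<oplus> r2 \<in> carrier R" using I(3) kr by auto
  ultimately show "a \<oplus> b \<in> {k \<oplus> r \<otimes> x | k r. k \<in> I \<and> r \<in> carrier R}"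
    by blast
next
  fix s a assume s: "s \<in> carrier R" and "a \<in> {k \<oplus> r \<otimes> x | k r. k \<in> I \<and> r \<in> carrier R}"
  then obtain k r where kr: "a = k \<oplus> r \<otimes> x" "k \<in> I" "r \<in> carrier R" by blast
  then have "s \<otimes> a = s \<otimes> k \<oplus> (s \<otimes> r) \<otimes> x"
    using left_idealD(1)[OF assms(1)] assms(2) s by (auto simp: r_distr m_assoc)
  moreover have "s \<otimes> k \<in> I" "s \<otimes> r \<in> carrier R" using left_idealD(4)[OF assms(1) s] kr s by auto
  ultimately show "s \<otimes> a \<in> {k \<oplus> r \<otimes> x | k r. k \<in> I \<and> r \<in> carrier R}"
    by blast
qed

lemma left_ideal_chain_Union:
  assumes "C \<noteq> {}" "\<And>I. I \<in> C \<Longrightarrow> left_ideal I R" "subset.chain UNIV C"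
  shows "left_ideal (\<Union>C) R"
proof (rule left_idealI)
  show "\<Union>C \<subseteq> carrier R" using left_idealD(1)[OF assms(2)] by blast
  show "\<Union>C \<noteq> {}" using assms(1) left_idealD(2)[OF assms(2)] by blast
  fix x y assume "x \<in> \<Union>C" "y \<in> \<Union>C"
  then obtain X Y where XY: "X \<in> C" "Y \<in> C" "x \<in> X" "y \<in> Y" by blast
  then have "X \<subseteq> Y \<or> Y \<subseteq> X" using assms(3) unfolding subset_chain_def by blast
  then show "x \<oplus> y \<in> \<Union>C" using XY left_idealD(3)[OF assms(2)] by blast
next
  fix r x assume "r \<in> carrier R" "x \<in> \<Union>C"
  then show "r \<otimes> x \<in> \<Union>C" using left_idealD(4)[OF assms(2)] by blast
qed

lemma left_ideal_imp_maximal_left_ideal: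
  assumes "left_ideal I R" "\<one> \<notin> I"
  obtains M where "maximal_left_ideal M R" "I \<subseteq> M"
proof -
  let ?A = "{K. left_ideal K R \<and> I \<subseteq> K \<and> \<one> \<notin> K}"
  have "\<Union>C \<in> ?A" if C: "C \<noteq> {}" "subset.chain ?A C" for C
  proof -
    have CA: "C \<subseteq> ?A" and "subset.chain UNIV C" using C(2) unfolding subset_chain_def by auto
    then have "left_ideal (\<Union>C) R" using left_ideal_chain_Union[OF C(1)] by blast
    moreover have "I \<subseteq> \<Union>C" using C(1) CA by blast
    moreover have "\<one> \<notin> \<Union>C" using CA by blast
    ultimately show ?thesis by blast
  qed
  moreover have "?A \<noteq> {}" using assms by blast
  ultimately obtain M where M: "M \<in> ?A" and max: "\<And>K. K \<in> ?A \<Longrightarrow> M \<subseteq> K \<Longrightarrow> K = M"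
    using subset_Zorn_nonempty[of ?A] by meson
  have "maximal_left_ideal M R"
    unfolding maximal_left_ideal_def
  proof (intro conjI allI impI)
    show "left_ideal M R" "M \<noteq> carrier R" using M by auto
    fix K assume K: "left_ideal K R \<and> M \<subseteq> K \<and> K \<noteq> carrier R"
    then have "\<one> \<notin> K" using left_ideal_one_imp_carrier by blast
    then show "K = M" using max K M by blast
  qed
  then show thesis using that M by blast
qed

lemma jacobson_radical_left_invertible:
  assumes J: "z \<in> jacobson_radical R" and r: "r \<in> carrier R"
  shows "\<exists>u \<in> carrier R. u \<otimes> (\<one> \<ominus> r \<otimes> z) = \<one>"
proof (rule ccontr)
  assume no_inv: "\<not> (\<exists>u \<in> carrier R. u \<otimes> (\<one> \<ominus> r \<otimes> z) = \<one>)"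
  have z: "z \<in> carrier R" using J unfolding jacobson_radical_def by blast
  define w where "w = \<one> \<ominus> r \<otimes> z"
  have w: "w \<in> carrier R" using r z unfolding w_def by simp
  have "left_ideal {q \<otimes> w | q. q \<in> carrier R} R" by (rule left_ideal_principal[OF w])
  moreover have "\<one> \<notin> {q \<otimes> w | q. q \<in> carrier R}" using no_inv unfolding w_def by auto
  ultimately obtain M where M: "maximal_left_ideal M R" and sub: "{q \<otimes> w | q. q \<in> carrier R} \<subseteq> M"
    by (rule left_ideal_imp_maximal_left_ideal)
  have LM: "left_ideal M R" and M_proper: "M \<noteq> carrier R"
    using M unfolding maximal_left_ideal_def by auto
  have "\<one> \<otimes> w \<in> M" using sub by blast
  then have "w \<in> M" using w by simp
  moreover have "z \<in> M" using J M unfolding jacobson_radical_def by blast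
  then have "r \<otimes> z \<in> M" using left_idealD(4)[OF LM r] by blast
  ultimately have "w \<oplus> r \<otimes> z \<in> M" using left_idealD(3)[OF LM] by blast
  moreover have "w \<oplus> r \<otimes> z = \<one>" using r z unfolding w_def by (simp add: minus_eq a_assoc l_neg)
  ultimately show False using left_ideal_one_imp_carrier[OF LM] M_proper by simp
qed

lemma jacobson_radicalI:
  assumes z: "z \<in> carrier R"
    and inv: "\<And>r. r \<in> carrier R \<Longrightarrow> \<exists>u \<in> carrier R. u \<otimes> (\<one> \<ominus> r \<otimes> z) = \<one>"
  shows "z \<in> jacobson_radical R"
proof -
  have "z \<in> M" if M: "maximal_left_ideal M R" for M
  proof (rule ccontr)
    assume "z \<notin> M"
    have LM: "left_ideal M R" and M_proper: "M \<noteq> carrier R"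
      using M unfolding maximal_left_ideal_def by auto
    let ?K = "{k \<oplus> r \<otimes> z | k r. k \<in> M \<and> r \<in> carrier R}"
    have "M \<subseteq> ?K"
    proof
      fix k assume "k \<in> M"
      moreover have "k = k \<oplus> \<zero> \<otimes> z" using \<open>k \<in> M\<close> left_idealD(1)[OF LM] z by auto
      ultimately show "k \<in> ?K" using zero_closed by blast
    qed
    moreover have "z = \<zero> \<oplus> \<one> \<otimes> z" using z by simp
    then have "z \<in> ?K" using left_idealD(2)[OF LM] one_closed by blast
    ultimately have "?K = carrier R"
      using M left_ideal_add_principal[OF LM z] \<open>z \<notin> M\<close> unfolding maximal_left_ideal_def by blast
    then have "\<one> \<in> ?K" by simp
    then obtain k r where kr: "\<one> = k \<oplus> r \<otimes> z" "k \<in> M" "r \<in> carrier R" by blast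
    have "k \<in> carrier R" using kr(2) left_idealD(1)[OF LM] by blast
    then have "\<one> \<ominus> r \<otimes> z = k" using kr(3) z unfolding kr(1) by (simp add: minus_eq a_assoc r_neg)
    then obtain u where "u \<in> carrier R" "u \<otimes> k = \<one>" using inv kr(3) by auto
    then have "\<one> \<in> M" using left_idealD(4)[OF LM] kr(2) by metis
    then show False using left_ideal_one_imp_carrier[OF LM] M_proper by blast
  qed
  then show ?thesis using z unfolding jacobson_radical_def by blast
qed

end

section \<open>Local rings\<close>

text \<open>Elements outside \<open>m\<close> are then automatically two-sided units, so this is the usual
  notion of a noncommutative local ring with maximal ideal \<open>m\<close>.\<close>
definition local_ring :: "('a, 'm) ring_scheme \<Rightarrow> bool" where
  "local_ring R \<longleftrightarrow> (\<exists>m. ideal m R \<and> m \<noteq> carrier R \<and>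
     (\<forall>x \<in> carrier R - m. \<exists>u \<in> carrier R. u \<otimes>\<^bsub>R\<^esub> x = \<one>\<^bsub>R\<^esub>))"

lemma (in monoid) nat_pow_left_inverse:
  assumes "u \<in> carrier G" "x \<in> carrier G" "u \<otimes> x = \<one>"
  shows "u [^] (n::nat) \<otimes> x [^] n = \<one>"
proof (induction n)
  case (Suc n)
  have "u [^] Suc n \<otimes> x [^] Suc n = (u [^] n \<otimes> u) \<otimes> (x \<otimes> x [^] n)"
    by (simp only: nat_pow_Suc[of u] nat_pow_Suc2[OF assms(2)])
  also have "\<dots> = u [^] n \<otimes> (u \<otimes> x) \<otimes> x [^] n"
    using assms(1,2) by (simp add: m_assoc)
  finally show ?case using assms Suc by simp
qed simp

context ring
begin

context
  fixes m
  assumes m_ideal: "ideal m R" and m_proper: "m \<noteq> carrier R"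
    and m_left_inv: "\<And>x. x \<in> carrier R \<Longrightarrow> x \<notin> m \<Longrightarrow> \<exists>u \<in> carrier R. u \<otimes> x = \<one>"
begin

interpretation m: ideal m R by (rule m_ideal)

lemma local_ideal_one_notin: "\<one> \<notin> m"
  using m.one_imp_carrier m_proper by blast

lemma local_ideal_mult_notin:
  assumes "x \<in> carrier R" "y \<in> carrier R" "x \<notin> m" "y \<notin> m"
  shows "x \<otimes> y \<notin> m"
proof
  assume "x \<otimes> y \<in> m"
  obtain u where u: "u \<in> carrier R" "u \<otimes> x = \<one>" using m_left_inv assms(1,3) by blast
  obtain v where v: "v \<in> carrier R" "v \<otimes> y = \<one>" using m_left_inv assms(2,4) by blast
  have "v \<otimes> (u \<otimes> (x \<otimes> y)) \<in> m" using \<open>x \<otimes> y \<in> m\<close> u v m.I_l_closed by simp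
  moreover have "v \<otimes> (u \<otimes> (x \<otimes> y)) = \<one>" using u v assms(1,2) by (simp flip: m_assoc)
  ultimately show False using local_ideal_one_notin by simp
qed

lemma nilpotents_subset_local_ideal: "nilpotents R \<subseteq> m"
proof
  fix x assume "x \<in> nilpotents R"
  then obtain n :: nat where x: "x \<in> carrier R" "x [^] n = \<zero>" unfolding nilpotents_def by blast
  show "x \<in> m"
  proof (rule ccontr)
    assume "x \<notin> m"
    then obtain u where "u \<in> carrier R" "u \<otimes> x = \<one>" using m_left_inv x(1) by blast
    then have "u [^] n \<otimes> x [^] n = \<one>" using nat_pow_left_inverse x(1) by blast
    then have "\<one> = \<zero>" using x \<open>u \<in> carrier R\<close> by simp
    then show False using local_ideal_one_notin m.zero_closed by simp
  qed
qed

lemma local_ideal_subset_jacobson_radical: "m \<subseteq> jacobson_radical R"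
proof
  fix z assume z: "z \<in> m"
  have "\<exists>u \<in> carrier R. u \<otimes> (\<one> \<ominus> r \<otimes> z) = \<one>" if r: "r \<in> carrier R" for r
  proof -
    have "r \<otimes> z \<in> m" using m.I_l_closed z r by blast
    then have "\<one> \<ominus> r \<otimes> z \<notin> m"
      using local_ideal_one_notin m.a_closed[of "\<one> \<ominus> r \<otimes> z" "r \<otimes> z"] m.Icarr z r
      by (auto simp: minus_eq a_assoc l_neg)
    then show ?thesis using m_left_inv m.Icarr z r by simp
  qed
  then show "z \<in> jacobson_radical R" using jacobson_radicalI m.Icarr z by blast
qed

end

lemma local_ring_NJ_symmetric:
  assumes "local_ring R" shows "NJ_symmetric R"
  unfolding NJ_symmetric_def
proof (intro ballI impI)
  obtain m where m: "ideal m R" "m \<noteq> carrier R"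
    and left_inv: "\<And>x. x \<in> carrier R \<Longrightarrow> x \<notin> m \<Longrightarrow> \<exists>u \<in> carrier R. u \<otimes> x = \<one>"
    using assms unfolding local_ring_def by blast
  interpret m: ideal m R by fact
  fix a b c assume abc: "a \<in> carrier R" "b \<in> carrier R" "c \<in> carrier R"
    and "a \<otimes> b \<otimes> c \<in> nilpotents R"
  then have "a \<otimes> b \<otimes> c \<in> m" using nilpotents_subset_local_ideal[OF m left_inv] by blast
  then consider "a \<in> m" | "b \<in> m" | "c \<in> m"
    using local_ideal_mult_notin[OF m left_inv] abc m_closed by metis
  then have "b \<otimes> a \<otimes> c \<in> m"
  proof cases
    case 1 then show ?thesis using abc m.I_l_closed m.I_r_closed by simp
  next
    case 2 then show ?thesis using abc m.I_r_closed by simp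
  next
    case 3 then show ?thesis using abc m.I_l_closed by simp
  qed
  then show "b \<otimes> a \<otimes> c \<in> jacobson_radical R"
    using local_ideal_subset_jacobson_radical[OF m left_inv] by blast
qed

end

lemma ring_iso_local_ring:
  assumes R: "ring R" and S: "ring S" and h: "h \<in> ring_iso R S" and "local_ring R"
  shows "local_ring S"
proof -
  obtain m where m: "ideal m R" "m \<noteq> carrier R"
    and left_inv: "\<And>x. x \<in> carrier R - m \<Longrightarrow> \<exists>u \<in> carrier R. u \<otimes>\<^bsub>R\<^esub> x = \<one>\<^bsub>R\<^esub>"
    using \<open>local_ring R\<close> unfolding local_ring_def by blast
  define g where "g = inv_into (carrier R) h"
  have "g \<in> ring_iso S R" unfolding g_def by (rule ring_iso_set_sym[OF R h])
  then interpret g: ring_hom_ring S R g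
    using ring_hom_ringI2[OF S R] unfolding ring_iso_def by blast
  interpret h: ring_hom_ring R S h
    using ring_hom_ringI2[OF R S] h unfolding ring_iso_def by blast
  have bij: "bij_betw h (carrier R) (carrier S)" using ring_iso_memE(5)[OF h] .
  have hg: "h (g s) = s" if "s \<in> carrier S" for s
    using that bij unfolding g_def by (simp add: bij_betw_inv_into_right)
  have gh: "g (h x) = x" if "x \<in> carrier R" for x
    using that bij unfolding g_def by (simp add: bij_betw_inv_into_left)
  let ?m = "{s \<in> carrier S. g s \<in> m}"
  have "ideal ?m S" by (rule g.ideal_vimage[OF m(1)])
  moreover have "?m \<noteq> carrier S"
  proof -
    obtain x where "x \<in> carrier R" "x \<notin> m" using m(2) ideal.Icarr[OF m(1)] by blast
    then have "h x \<in> carrier S - ?m" using gh by auto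
    then show ?thesis by blast
  qed
  moreover have "\<exists>v \<in> carrier S. v \<otimes>\<^bsub>S\<^esub> s = \<one>\<^bsub>S\<^esub>" if s: "s \<in> carrier S - ?m" for s
  proof -
    have "g s \<in> carrier R - m" using s g.hom_closed by blast
    then obtain u where u: "u \<in> carrier R" "u \<otimes>\<^bsub>R\<^esub> g s = \<one>\<^bsub>R\<^esub>" using left_inv by blast
    then have "h u \<otimes>\<^bsub>S\<^esub> s = \<one>\<^bsub>S\<^esub>" using s hg h.hom_mult[of u "g s"] by simp
    then show ?thesis using h.hom_closed[OF u(1)] by blast
  qed
  ultimately show ?thesis unfolding local_ring_def by blast
qed

lemma ring_iso_nilpotents_iff:
  assumes "ring R" "ring S" "h \<in> ring_iso R S" "x \<in> carrier R"
  shows "h x \<in> nilpotents S \<longleftrightarrow> x \<in> nilpotents R"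
proof -
  interpret h: ring_hom_ring R S h
    using ring_hom_ringI2[OF assms(1,2)] assms(3) unfolding ring_iso_def by blast
  have inj: "inj_on h (carrier R)" using ring_iso_memE(5)[OF assms(3)] by (rule bij_betw_imp_inj_on)
  have "h (x [^]\<^bsub>R\<^esub> n) = \<zero>\<^bsub>S\<^esub> \<longleftrightarrow> x [^]\<^bsub>R\<^esub> n = \<zero>\<^bsub>R\<^esub>" for n :: nat
    using inj_onD[OF inj, of "x [^]\<^bsub>R\<^esub> n" "\<zero>\<^bsub>R\<^esub>"] assms(4) by auto
  then show ?thesis using assms(4) unfolding nilpotents_def by (simp add: h.hom_nat_pow)
qed

lemma ring_iso_zero_product_witness:
  assumes R: "ring R" and S: "ring S" and h: "h \<in> ring_iso R S"
    and abc: "a \<in> carrier R" "b \<in> carrier R" "c \<in> carrier R"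
    and zero: "a \<otimes>\<^bsub>R\<^esub> b \<otimes>\<^bsub>R\<^esub> c = \<zero>\<^bsub>R\<^esub>"
    and not_nil: "b \<otimes>\<^bsub>R\<^esub> a \<otimes>\<^bsub>R\<^esub> c \<notin> nilpotents R"
  shows "h a \<otimes>\<^bsub>S\<^esub> h b \<otimes>\<^bsub>S\<^esub> h c = \<zero>\<^bsub>S\<^esub>"
    and "h b \<otimes>\<^bsub>S\<^esub> h a \<otimes>\<^bsub>S\<^esub> h c \<notin> nilpotents S"
proof -
  interpret h: ring_hom_ring R S h
    using ring_hom_ringI2[OF R S] h unfolding ring_iso_def by blast
  show "h a \<otimes>\<^bsub>S\<^esub> h b \<otimes>\<^bsub>S\<^esub> h c = \<zero>\<^bsub>S\<^esub>"
    using abc zero by (metis h.hom_mult h.hom_zero h.R.m_closed)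
  show "h b \<otimes>\<^bsub>S\<^esub> h a \<otimes>\<^bsub>S\<^esub> h c \<notin> nilpotents S"
    using ring_iso_nilpotents_iff[OF R S h, of "b \<otimes>\<^bsub>R\<^esub> a \<otimes>\<^bsub>R\<^esub> c"] abc not_nil by simp
qed

section \<open>Polynomial rings\<close>

context UP_ring
begin

lemma coeff_mult_monom1:
  assumes p: "p \<in> carrier P" and a: "a \<in> carrier R"
  shows "coeff P (p \<otimes>\<^bsub>P\<^esub> monom P a 1) k = (if k = 0 then \<zero> else coeff P p (k - 1) \<otimes> a)"
proof (cases k)
  case (Suc n)
  have "coeff P (p \<otimes>\<^bsub>P\<^esub> monom P a 1) k
      = (\<Oplus>i \<in> {..Suc n}. coeff P p i \<otimes> (if 1 = Suc n - i then a else \<zero>))"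
    using p a Suc by simp
  also have "\<dots> = (\<Oplus>i \<in> {..Suc n}. (if n = i then coeff P p i \<otimes> a else \<zero>))"
    using p a by (intro R.finsum_cong') auto
  also have "\<dots> = coeff P p n \<otimes> a"
    using R.finsum_singleton[of n "{..Suc n}" "\<lambda>i. coeff P p i \<otimes> a"] p a by auto
  finally show ?thesis using Suc by simp
qed (use p a in simp)

text \<open>A left inverse of \<open>1 - y X\<close> would have to be the power series \<open>\<Sum> y\<^sup>k X\<^sup>k\<close>,
  which is not a polynomial unless \<open>y\<close> is nilpotent.\<close>
lemma one_minus_monom1_not_left_invertible:
  assumes y: "y \<in> carrier R" and not_nil: "\<And>n::nat. y [^] n \<noteq> \<zero>" and q: "q \<in> carrier P"
  shows "q \<otimes>\<^bsub>P\<^esub> (\<one>\<^bsub>P\<^esub> \<ominus>\<^bsub>P\<^esub> monom P y 1) \<noteq> \<one>\<^bsub>P\<^esub>"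
proof
  assume inv: "q \<otimes>\<^bsub>P\<^esub> (\<one>\<^bsub>P\<^esub> \<ominus>\<^bsub>P\<^esub> monom P y 1) = \<one>\<^bsub>P\<^esub>"
  have yX: "monom P y 1 \<in> carrier P" using y by simp
  have "q = q \<otimes>\<^bsub>P\<^esub> (\<one>\<^bsub>P\<^esub> \<ominus>\<^bsub>P\<^esub> monom P y 1) \<oplus>\<^bsub>P\<^esub> q \<otimes>\<^bsub>P\<^esub> monom P y 1"
    using q yX by (simp add: P.minus_eq P.r_distr P.r_minus P.a_assoc P.l_neg)
  then have q_eq: "q = \<one>\<^bsub>P\<^esub> \<oplus>\<^bsub>P\<^esub> q \<otimes>\<^bsub>P\<^esub> monom P y 1" using inv by simp
  have coeff_q: "coeff P q k = y [^] k" for k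
  proof (induction k)
    case 0
    show ?case using q y by (subst q_eq) (simp add: coeff_mult_monom1 del: coeff_mult One_nat_def)
  next
    case (Suc k)
    have "coeff P q (Suc k) = coeff P q k \<otimes> y"
      using q y by (subst q_eq) (simp add: coeff_mult_monom1 del: coeff_mult One_nat_def)
    then show ?case using Suc by simp
  qed
  have "coeff P q (Suc (deg R q)) = \<zero>" using deg_aboveD q by simp
  then show False using coeff_q not_nil by metis
qed

lemma monom0_notin_jacobson_radical:
  assumes y: "y \<in> carrier R" and not_nil: "\<And>n::nat. y [^] n \<noteq> \<zero>"
  shows "monom P y 0 \<notin> jacobson_radical P"
proof
  assume "monom P y 0 \<in> jacobson_radical P"
  then obtain q where q: "q \<in> carrier P"
    and "q \<otimes>\<^bsub>P\<^esub> (\<one>\<^bsub>P\<^esub> \<ominus>\<^bsub>P\<^esub> monom P \<one> 1 \<otimes>\<^bsub>P\<^esub> monom P y 0) = \<one>\<^bsub>P\<^esub>"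
    using P.jacobson_radical_left_invertible by (meson R.one_closed monom_closed)
  moreover have "monom P \<one> 1 \<otimes>\<^bsub>P\<^esub> monom P y 0 = monom P y 1"
    using y monom_mult[of \<one> y 1 0] by simp
  ultimately show False using one_minus_monom1_not_left_invertible[OF y not_nil q] by simp
qed

lemma UP_not_NJ_symmetric:
  assumes abc: "a \<in> carrier R" "b \<in> carrier R" "c \<in> carrier R" and "a \<otimes> b \<otimes> c = \<zero>"
    and "b \<otimes> a \<otimes> c \<notin> nilpotents R"
  shows "\<not> NJ_symmetric P"
proof
  assume NJ: "NJ_symmetric P"
  have monom0_mult: "monom P x 0 \<otimes>\<^bsub>P\<^esub> monom P y 0 \<otimes>\<^bsub>P\<^esub> monom P z 0 = monom P (x \<otimes> y \<otimes> z) 0"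
    if "x \<in> carrier R" "y \<in> carrier R" "z \<in> carrier R" for x y z
    using that monom_mult[of x y 0 0] monom_mult[of "x \<otimes> y" z 0 0] by simp
  have "monom P a 0 \<otimes>\<^bsub>P\<^esub> monom P b 0 \<otimes>\<^bsub>P\<^esub> monom P c 0 = \<zero>\<^bsub>P\<^esub>"
    using abc \<open>a \<otimes> b \<otimes> c = \<zero>\<close> monom0_mult by simp
  then have "monom P a 0 \<otimes>\<^bsub>P\<^esub> monom P b 0 \<otimes>\<^bsub>P\<^esub> monom P c 0 \<in> nilpotents P"
    unfolding nilpotents_def by (auto intro: exI[of _ "1::nat"])
  then have "monom P (b \<otimes> a \<otimes> c) 0 \<in> jacobson_radical P"
    using NJ abc monom0_mult[of b a c] unfolding NJ_symmetric_def by (metis monom_closed)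
  moreover have "(b \<otimes> a \<otimes> c) [^] n \<noteq> \<zero>" for n :: nat
    using \<open>b \<otimes> a \<otimes> c \<notin> nilpotents R\<close> abc unfolding nilpotents_def by auto
  ultimately show False using monom0_notin_jacobson_radical abc by simp
qed

end

section \<open>The integers localised at 2\<close>

text \<open>\<open>Zloc2\<close> is the localisation of \<open>\<int>\<close> at the prime 2 (the rationals with odd
  denominator) and \<open>two_Zloc2\<close> its maximal ideal.\<close>
definition Zloc2 :: "rat set" where
  "Zloc2 = {of_int n / of_int d | n d. odd d}"

definition two_Zloc2 :: "rat set" where
  "two_Zloc2 = {q. q / 2 \<in> Zloc2}"

lemma of_int_odd_neq_zero: "odd d \<Longrightarrow> (of_int d :: rat) \<noteq> 0"
  by auto

lemma Zloc2I: "odd d \<Longrightarrow> of_int n / of_int d \<in> Zloc2"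
  unfolding Zloc2_def by blast

lemma Zloc2_add: "p \<in> Zloc2 \<Longrightarrow> q \<in> Zloc2 \<Longrightarrow> p + q \<in> Zloc2"
proof -
  assume "p \<in> Zloc2" "q \<in> Zloc2"
  then obtain n1 d1 n2 d2
    where pq: "p = of_int n1 / of_int d1" "odd d1" "q = of_int n2 / of_int d2" "odd d2"
    unfolding Zloc2_def by blast
  then have "p + q = of_int (n1 * d2 + n2 * d1) / of_int (d1 * d2)"
    using of_int_odd_neq_zero[OF pq(2)] of_int_odd_neq_zero[OF pq(4)] by (simp add: field_simps)
  then show "p + q \<in> Zloc2" using pq Zloc2I[of "d1 * d2" "n1 * d2 + n2 * d1"] by simp
qed

lemma Zloc2_mult: "p \<in> Zloc2 \<Longrightarrow> q \<in> Zloc2 \<Longrightarrow> p * q \<in> Zloc2"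
proof -
  assume "p \<in> Zloc2" "q \<in> Zloc2"
  then obtain n1 d1 n2 d2
    where pq: "p = of_int n1 / of_int d1" "odd d1" "q = of_int n2 / of_int d2" "odd d2"
    unfolding Zloc2_def by blast
  then have "p * q = of_int (n1 * n2) / of_int (d1 * d2)" by simp
  then show "p * q \<in> Zloc2" using pq Zloc2I[of "d1 * d2" "n1 * n2"] by simp
qed

lemma Zloc2_uminus: "q \<in> Zloc2 \<Longrightarrow> - q \<in> Zloc2"
proof -
  assume "q \<in> Zloc2"
  then obtain n d where "q = of_int n / of_int d" "odd d" unfolding Zloc2_def by blast
  then show "- q \<in> Zloc2" unfolding Zloc2_def by (intro CollectI exI[of _ "- n"] exI[of _ d]) simp
qed

lemma Zloc2_of_int: "of_int n \<in> Zloc2"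
  unfolding Zloc2_def by (intro CollectI exI[of _ n] exI[of _ 1]) simp

lemma zero_in_Zloc2: "0 \<in> Zloc2" and one_in_Zloc2: "1 \<in> Zloc2"
  using Zloc2_of_int[of 0] Zloc2_of_int[of 1] by simp_all

lemma two_Zloc2_subset: "two_Zloc2 \<subseteq> Zloc2"
proof
  fix q assume "q \<in> two_Zloc2"
  then show "q \<in> Zloc2"
    using Zloc2_mult[OF Zloc2_of_int[of 2], of "q / 2"] unfolding two_Zloc2_def by simp
qed

lemma two_Zloc2_add: "p \<in> two_Zloc2 \<Longrightarrow> q \<in> two_Zloc2 \<Longrightarrow> p + q \<in> two_Zloc2"
  unfolding two_Zloc2_def using Zloc2_add[of "p / 2" "q / 2"] by (simp add: add_divide_distrib)

lemma two_Zloc2_uminus: "q \<in> two_Zloc2 \<Longrightarrow> - q \<in> two_Zloc2"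
  unfolding two_Zloc2_def using Zloc2_uminus[of "q / 2"] by simp

lemma two_Zloc2_diff: "p \<in> two_Zloc2 \<Longrightarrow> q \<in> two_Zloc2 \<Longrightarrow> p - q \<in> two_Zloc2"
  using two_Zloc2_add[OF _ two_Zloc2_uminus] by (simp only: diff_conv_add_uminus)

lemma two_Zloc2_mult_left: "p \<in> Zloc2 \<Longrightarrow> q \<in> two_Zloc2 \<Longrightarrow> p * q \<in> two_Zloc2"
  unfolding two_Zloc2_def using Zloc2_mult[of p "q / 2"] by simp

lemma two_Zloc2_mult_right: "p \<in> two_Zloc2 \<Longrightarrow> q \<in> Zloc2 \<Longrightarrow> p * q \<in> two_Zloc2"
  using two_Zloc2_mult_left[of q p] by (simp add: mult.commute)

lemma zero_in_two_Zloc2: "0 \<in> two_Zloc2" and two_in_two_Zloc2: "2 \<in> two_Zloc2"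
  unfolding two_Zloc2_def by (simp_all add: zero_in_Zloc2 one_in_Zloc2)

lemma Zloc2_minus_two_Zloc2: "Zloc2 - two_Zloc2 = {of_int n / of_int d | n d. odd n \<and> odd d}"
proof (intro equalityI subsetI)
  fix q assume "q \<in> Zloc2 - two_Zloc2"
  then obtain n d where q: "q = of_int n / of_int d" "odd d" and "q \<notin> two_Zloc2"
    unfolding Zloc2_def by blast
  have "odd n"
  proof
    assume "even n"
    then obtain k where "n = 2 * k" by blast
    then have "q / 2 = of_int k / of_int d" using q by simp
    then have "q \<in> two_Zloc2" using q(2) unfolding two_Zloc2_def Zloc2_def by blast
    then show False using \<open>q \<notin> two_Zloc2\<close> by contradiction
  qed
  then show "q \<in> {of_int n / of_int d | n d. odd n \<and> odd d}" using q by blast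
next
  fix q :: rat assume "q \<in> {of_int n / of_int d | n d. odd n \<and> odd d}"
  then obtain n d where q: "q = of_int n / of_int d" "odd n" "odd d" by blast
  have "q \<notin> two_Zloc2"
  proof
    assume "q \<in> two_Zloc2"
    then obtain n' d' where "q / 2 = of_int n' / of_int d'" "odd d'"
      unfolding two_Zloc2_def Zloc2_def by blast
    then have "(of_int (n * d') :: rat) = of_int (2 * n' * d)"
      using q of_int_odd_neq_zero by (simp add: field_simps)
    then have "n * d' = 2 * n' * d" by (simp only: of_int_eq_iff)
    then show False using q(2) \<open>odd d'\<close> by (metis even_mult_iff even_numeral mult.assoc)
  qed
  moreover have "q \<in> Zloc2" using q unfolding Zloc2_def by blast
  ultimately show "q \<in> Zloc2 - two_Zloc2" by blast
qed

lemma one_notin_two_Zloc2: "1 \<notin> two_Zloc2"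
proof -
  have "1 \<in> Zloc2 - two_Zloc2"
    unfolding Zloc2_minus_two_Zloc2 by (intro CollectI exI[of _ 1] exI[of _ 1]) simp
  then show ?thesis by blast
qed

lemma Zloc2_mult_notin_two_Zloc2:
  assumes "p \<in> Zloc2 - two_Zloc2" "q \<in> Zloc2 - two_Zloc2"
  shows "p * q \<in> Zloc2 - two_Zloc2"
proof -
  obtain n1 d1 n2 d2 where "p = of_int n1 / of_int d1" "q = of_int n2 / of_int d2"
    "odd n1" "odd d1" "odd n2" "odd d2"
    using assms unfolding Zloc2_minus_two_Zloc2 by blast
  then have "p * q = of_int (n1 * n2) / of_int (d1 * d2)" "odd (n1 * n2)" "odd (d1 * d2)"
    by simp_all
  then show ?thesis unfolding Zloc2_minus_two_Zloc2 by blast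
qed

lemma Zloc2_inverse:
  assumes "q \<in> Zloc2 - two_Zloc2"
  shows "q \<noteq> 0" "inverse q \<in> Zloc2"
proof -
  obtain n d where q: "q = of_int n / of_int d" "odd n" "odd d"
    using assms unfolding Zloc2_minus_two_Zloc2 by blast
  then show "q \<noteq> 0" using of_int_odd_neq_zero by simp
  have "inverse q = of_int d / of_int n" using q by simp
  then show "inverse q \<in> Zloc2" using q(2) unfolding Zloc2_def by blast
qed

section \<open>A local ring of 2x2 matrices\<close>

text \<open>A quadruple \<open>(a, b, c, d)\<close> encodes the matrix \<open>[[a, b], [c, d]]\<close>.\<close>
type_synonym mat2 = "rat \<times> rat \<times> rat \<times> rat"

fun mat2_mult :: "mat2 \<Rightarrow> mat2 \<Rightarrow> mat2" where
  "mat2_mult (a, b, c, d) (a', b', c', d') =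
     (a * a' + b * c', a * b' + b * d', c * a' + d * c', c * b' + d * d')"

fun mat2_add :: "mat2 \<Rightarrow> mat2 \<Rightarrow> mat2" where
  "mat2_add (a, b, c, d) (a', b', c', d') = (a + a', b + b', c + c', d + d')"

definition mat2_ring :: "mat2 ring" where
  "mat2_ring = \<lparr>carrier = UNIV, mult = mat2_mult, one = (1, 0, 0, 1),
     zero = (0, 0, 0, 0), add = mat2_add\<rparr>"

lemma mat2_add_assoc: "mat2_add (mat2_add x y) z = mat2_add x (mat2_add y z)"
  by (cases x; cases y; cases z) (simp add: algebra_simps)

lemma mat2_add_commute: "mat2_add x y = mat2_add y x"
  by (cases x; cases y) (simp add: algebra_simps)

lemma mat2_add_zero: "mat2_add (0, 0, 0, 0) x = x"
  by (cases x) simp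

lemma mat2_mult_assoc: "mat2_mult (mat2_mult x y) z = mat2_mult x (mat2_mult y z)"
  by (cases x; cases y; cases z) (simp add: algebra_simps)

lemma mat2_mult_one: "mat2_mult (1, 0, 0, 1) x = x" "mat2_mult x (1, 0, 0, 1) = x"
  by (cases x; simp)+

lemma mat2_distrib:
  "mat2_mult (mat2_add x y) z = mat2_add (mat2_mult x z) (mat2_mult y z)"
  "mat2_mult z (mat2_add x y) = mat2_add (mat2_mult z x) (mat2_mult z y)"
  by (cases x; cases y; cases z; simp add: algebra_simps)+

lemma ring_mat2_ring: "ring mat2_ring"
proof (rule ringI)
  show "abelian_group mat2_ring"
    by (rule abelian_groupI)
      (auto simp: mat2_ring_def mat2_add_assoc mat2_add_zero add_eq_0_iff2 intro: mat2_add_commute)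
  show "monoid mat2_ring"
    by (rule monoidI) (simp_all add: mat2_ring_def mat2_mult_assoc mat2_mult_one)
qed (simp_all add: mat2_ring_def mat2_distrib)

definition Zloc2_mats :: "mat2 set" where
  "Zloc2_mats = {(a, b, c, d). a \<in> Zloc2 \<and> b \<in> Zloc2 \<and> c \<in> two_Zloc2 \<and> a - d \<in> two_Zloc2}"

definition Zloc2_mat_ring :: "mat2 ring" where
  "Zloc2_mat_ring = mat2_ring\<lparr>carrier := Zloc2_mats\<rparr>"

lemma Zloc2_mats_iff:
  "(a, b, c, d) \<in> Zloc2_mats \<longleftrightarrow> a \<in> Zloc2 \<and> b \<in> Zloc2 \<and> c \<in> two_Zloc2 \<and> a - d \<in> two_Zloc2"
  unfolding Zloc2_mats_def by simp

lemma Zloc2_mats_diag: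
  assumes "(a, b, c, d) \<in> Zloc2_mats" shows "d \<in> Zloc2"
proof -
  have "a + - (a - d) \<in> Zloc2"
    using assms two_Zloc2_subset unfolding Zloc2_mats_iff by (blast intro: Zloc2_add Zloc2_uminus)
  then show ?thesis by simp
qed

lemma Zloc2_mats_add:
  assumes "(a, b, c, d) \<in> Zloc2_mats" "(a', b', c', d') \<in> Zloc2_mats"
  shows "(a + a', b + b', c + c', d + d') \<in> Zloc2_mats"
proof -
  have "a + a' - (d + d') = (a - d) + (a' - d')" by simp
  then show ?thesis using assms unfolding Zloc2_mats_iff by (metis Zloc2_add two_Zloc2_add)
qed

lemma Zloc2_mats_uminus:
  assumes "(a, b, c, d) \<in> Zloc2_mats"
  shows "(- a, - b, - c, - d) \<in> Zloc2_mats"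
proof -
  have "- a - - d = - (a - d)" by simp
  then show ?thesis using assms unfolding Zloc2_mats_iff by (metis Zloc2_uminus two_Zloc2_uminus)
qed

lemma Zloc2_mats_mult:
  assumes x: "(a, b, c, d) \<in> Zloc2_mats" and y: "(a', b', c', d') \<in> Zloc2_mats"
  shows "mat2_mult (a, b, c, d) (a', b', c', d') \<in> Zloc2_mats"
proof -
  have h: "a \<in> Zloc2" "b \<in> Zloc2" "c \<in> two_Zloc2" "a - d \<in> two_Zloc2"
    "a' \<in> Zloc2" "b' \<in> Zloc2" "c' \<in> two_Zloc2" "a' - d' \<in> two_Zloc2"
    using x y unfolding Zloc2_mats_iff by auto
  have d: "d \<in> Zloc2" "d' \<in> Zloc2" using Zloc2_mats_diag x y by blast+
  have c: "c' \<in> Zloc2" using h(7) two_Zloc2_subset by blast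
  have diag: "(a * a' + b * c') - (c * b' + d * d')
      = a * (a' - d') + (a - d) * d' + (b * c' - c * b')"
    by (simp add: algebra_simps)
  have "a * a' + b * c' \<in> Zloc2" using h c by (intro Zloc2_add Zloc2_mult)
  moreover have "a * b' + b * d' \<in> Zloc2" using h d by (intro Zloc2_add Zloc2_mult)
  moreover have "c * a' + d * c' \<in> two_Zloc2"
    using h d by (intro two_Zloc2_add two_Zloc2_mult_left two_Zloc2_mult_right)
  moreover have "(a * a' + b * c') - (c * b' + d * d') \<in> two_Zloc2"
    unfolding diag
    by (intro two_Zloc2_add two_Zloc2_diff two_Zloc2_mult_left[OF h(1) h(8)]
        two_Zloc2_mult_right[OF h(4) d(2)] two_Zloc2_mult_left[OF h(2) h(7)]
        two_Zloc2_mult_right[OF h(3) h(6)])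
  ultimately show ?thesis by (simp add: Zloc2_mats_iff)
qed

lemma Zloc2_mats_mult_fst:
  assumes "x \<in> Zloc2_mats" "y \<in> Zloc2_mats" "fst x \<in> two_Zloc2 \<or> fst y \<in> two_Zloc2"
  shows "fst (mat2_mult x y) \<in> two_Zloc2"
proof -
  obtain a b c d a' b' c' d' where xy: "x = (a, b, c, d)" "y = (a', b', c', d')"
    by (cases x, cases y)
  have "a \<in> Zloc2" "b \<in> Zloc2" "c' \<in> two_Zloc2" "a' \<in> Zloc2"
    using assms(1,2) unfolding xy Zloc2_mats_iff by auto
  then have "a * a' + b * c' \<in> two_Zloc2"
    using assms(3) unfolding xy
    by (auto intro: two_Zloc2_add two_Zloc2_mult_left two_Zloc2_mult_right)
  then show ?thesis unfolding xy by simp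
qed

lemma mat2_a_inv: "\<ominus>\<^bsub>mat2_ring\<^esub> (a, b, c, d) = (- a, - b, - c, - d)"
  by (rule abelian_group.minus_equality[OF ring.is_abelian_group[OF ring_mat2_ring]])
    (simp_all add: mat2_ring_def)

lemma subring_Zloc2_mats: "subring Zloc2_mats mat2_ring"
proof (rule ring.subringI[OF ring_mat2_ring])
  show "Zloc2_mats \<subseteq> carrier mat2_ring" by (simp add: mat2_ring_def)
  show "\<one>\<^bsub>mat2_ring\<^esub> \<in> Zloc2_mats"
    by (simp add: mat2_ring_def Zloc2_mats_iff zero_in_Zloc2 one_in_Zloc2 zero_in_two_Zloc2)
  show "\<ominus>\<^bsub>mat2_ring\<^esub> x \<in> Zloc2_mats" if "x \<in> Zloc2_mats" for x
    using that Zloc2_mats_uminus by (cases x) (simp add: mat2_a_inv)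
  show "x \<oplus>\<^bsub>mat2_ring\<^esub> y \<in> Zloc2_mats" "x \<otimes>\<^bsub>mat2_ring\<^esub> y \<in> Zloc2_mats"
    if "x \<in> Zloc2_mats" "y \<in> Zloc2_mats" for x y
    using that Zloc2_mats_add Zloc2_mats_mult by (cases x, cases y, simp add: mat2_ring_def)+
qed

lemma ring_Zloc2_mat_ring: "ring Zloc2_mat_ring"
  unfolding Zloc2_mat_ring_def by (rule ring.subring_is_ring[OF ring_mat2_ring subring_Zloc2_mats])

lemma Zloc2_mat_ring_simps:
  "carrier Zloc2_mat_ring = Zloc2_mats"
  "x \<otimes>\<^bsub>Zloc2_mat_ring\<^esub> y = mat2_mult x y"
  "x \<oplus>\<^bsub>Zloc2_mat_ring\<^esub> y = mat2_add x y"
  "\<one>\<^bsub>Zloc2_mat_ring\<^esub> = (1, 0, 0, 1)"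
  "\<zero>\<^bsub>Zloc2_mat_ring\<^esub> = (0, 0, 0, 0)"
  by (simp_all add: Zloc2_mat_ring_def mat2_ring_def)

definition Zloc2_mat_ideal :: "mat2 set" where
  "Zloc2_mat_ideal = {x \<in> Zloc2_mats. fst x \<in> two_Zloc2}"

lemma ideal_Zloc2_mat_ideal: "ideal Zloc2_mat_ideal Zloc2_mat_ring"
proof -
  interpret ring Zloc2_mat_ring by (rule ring_Zloc2_mat_ring)
  have sub: "Zloc2_mat_ideal \<subseteq> carrier Zloc2_mat_ring"
    unfolding Zloc2_mat_ideal_def Zloc2_mat_ring_simps by blast
  have "left_ideal Zloc2_mat_ideal Zloc2_mat_ring"
  proof (rule left_idealI[OF sub])
    have "(0, 0, 0, 0) \<in> Zloc2_mat_ideal"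
      using zero_closed zero_in_two_Zloc2 unfolding Zloc2_mat_ideal_def Zloc2_mat_ring_simps by simp
    then show "Zloc2_mat_ideal \<noteq> {}" by blast
  next
    fix x y assume xy: "x \<in> Zloc2_mat_ideal" "y \<in> Zloc2_mat_ideal"
    then have "x \<oplus>\<^bsub>Zloc2_mat_ring\<^esub> y \<in> carrier Zloc2_mat_ring" using sub by (intro a_closed) auto
    then show "x \<oplus>\<^bsub>Zloc2_mat_ring\<^esub> y \<in> Zloc2_mat_ideal"
      using xy unfolding Zloc2_mat_ideal_def Zloc2_mat_ring_simps
      by (cases x, cases y) (simp add: two_Zloc2_add)
  next
    fix r x assume rx: "r \<in> carrier Zloc2_mat_ring" "x \<in> Zloc2_mat_ideal"
    then have "r \<otimes>\<^bsub>Zloc2_mat_ring\<^esub> x \<in> carrier Zloc2_mat_ring" using sub by (intro m_closed) auto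
    then show "r \<otimes>\<^bsub>Zloc2_mat_ring\<^esub> x \<in> Zloc2_mat_ideal"
      using rx Zloc2_mats_mult_fst[of r x]
      unfolding Zloc2_mat_ideal_def Zloc2_mat_ring_simps by simp
  qed
  then show ?thesis
  proof (rule ideal_of_left_ideal)
    fix x r assume xr: "x \<in> Zloc2_mat_ideal" "r \<in> carrier Zloc2_mat_ring"
    then have "x \<otimes>\<^bsub>Zloc2_mat_ring\<^esub> r \<in> carrier Zloc2_mat_ring" using sub by (intro m_closed) auto
    then show "x \<otimes>\<^bsub>Zloc2_mat_ring\<^esub> r \<in> Zloc2_mat_ideal"
      using xr Zloc2_mats_mult_fst[of x r]
      unfolding Zloc2_mat_ideal_def Zloc2_mat_ring_simps by simp
  qed
qed

lemma Zloc2_mats_det_notin_two_Zloc2: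
  assumes x: "(a, b, c, d) \<in> Zloc2_mats" and a_odd: "a \<notin> two_Zloc2"
  shows "a * d - b * c \<in> Zloc2 - two_Zloc2"
proof -
  have h: "a \<in> Zloc2" "b \<in> Zloc2" "c \<in> two_Zloc2" "a - d \<in> two_Zloc2" "d \<in> Zloc2"
    using x Zloc2_mats_diag[OF x] unfolding Zloc2_mats_iff by auto
  have "d \<notin> two_Zloc2"
  proof
    assume "d \<in> two_Zloc2"
    with h(4) have "(a - d) + d \<in> two_Zloc2" by (rule two_Zloc2_add)
    then show False using a_odd by simp
  qed
  then have ad: "a * d \<in> Zloc2 - two_Zloc2"
    using Zloc2_mult_notin_two_Zloc2 h(1,5) a_odd by blast
  have bc: "b * c \<in> two_Zloc2" using h(2,3) by (rule two_Zloc2_mult_left)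
  have "a * d - b * c \<notin> two_Zloc2"
  proof
    assume "a * d - b * c \<in> two_Zloc2"
    then have "(a * d - b * c) + b * c \<in> two_Zloc2" using bc by (rule two_Zloc2_add)
    then show False using ad by simp
  qed
  moreover have "a * d + - (b * c) \<in> Zloc2"
    using ad bc two_Zloc2_subset by (blast intro: Zloc2_add Zloc2_uminus)
  ultimately show ?thesis by simp
qed

lemma Zloc2_mats_left_inverse:
  assumes x: "(a, b, c, d) \<in> Zloc2_mats" and a_odd: "a \<notin> two_Zloc2"
  shows "\<exists>u \<in> Zloc2_mats. mat2_mult u (a, b, c, d) = (1, 0, 0, 1)"
proof -
  have h: "b \<in> Zloc2" "c \<in> two_Zloc2" "a - d \<in> two_Zloc2" "d \<in> Zloc2"
    using x Zloc2_mats_diag[OF x] unfolding Zloc2_mats_iff by auto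
  define i where "i = inverse (a * d - b * c)"
  have det: "a * d - b * c \<noteq> 0" and i: "i \<in> Zloc2"
    using Zloc2_inverse[OF Zloc2_mats_det_notin_two_Zloc2[OF x a_odd]] unfolding i_def by auto
  have "d * i - a * i = - ((a - d) * i)" by (simp add: algebra_simps)
  moreover have "- ((a - d) * i) \<in> two_Zloc2"
    using h(3) i by (intro two_Zloc2_uminus two_Zloc2_mult_right)
  moreover have "- b * i \<in> Zloc2" "d * i \<in> Zloc2"
    using h(1,4) i by (auto intro: Zloc2_mult Zloc2_uminus)
  moreover have "- c * i \<in> two_Zloc2"
    using h(2) i by (auto intro: two_Zloc2_uminus two_Zloc2_mult_right)
  ultimately have "(d * i, - b * i, - c * i, a * i) \<in> Zloc2_mats"
    unfolding Zloc2_mats_iff by simp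
  moreover have "mat2_mult (d * i, - b * i, - c * i, a * i) (a, b, c, d) = (1, 0, 0, 1)"
  proof -
    have "mat2_mult (d * i, - b * i, - c * i, a * i) (a, b, c, d)
        = ((a * d - b * c) * i, 0, 0, (a * d - b * c) * i)"
      by (simp add: algebra_simps)
    also have "\<dots> = (1, 0, 0, 1)" using det unfolding i_def by simp
    finally show ?thesis .
  qed
  ultimately show ?thesis by blast
qed

lemma local_ring_Zloc2_mat_ring: "local_ring Zloc2_mat_ring"
  unfolding local_ring_def
proof (intro exI conjI ballI)
  show "ideal Zloc2_mat_ideal Zloc2_mat_ring" by (rule ideal_Zloc2_mat_ideal)
  have "(1, 0, 0, 1) \<in> carrier Zloc2_mat_ring - Zloc2_mat_ideal"
    using one_notin_two_Zloc2 monoid.one_closed[OF ring.is_monoid[OF ring_Zloc2_mat_ring]]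
    unfolding Zloc2_mat_ideal_def Zloc2_mat_ring_simps by simp
  then show "Zloc2_mat_ideal \<noteq> carrier Zloc2_mat_ring" by blast
  fix x assume "x \<in> carrier Zloc2_mat_ring - Zloc2_mat_ideal"
  then show "\<exists>u \<in> carrier Zloc2_mat_ring. u \<otimes>\<^bsub>Zloc2_mat_ring\<^esub> x = \<one>\<^bsub>Zloc2_mat_ring\<^esub>"
    using Zloc2_mats_left_inverse unfolding Zloc2_mat_ideal_def Zloc2_mat_ring_simps
    by (cases x) auto
qed

lemma Zloc2_mat_ring_zero_product_witness:
  "\<exists>a \<in> carrier Zloc2_mat_ring. \<exists>b \<in> carrier Zloc2_mat_ring. \<exists>c \<in> carrier Zloc2_mat_ring.
     a \<otimes>\<^bsub>Zloc2_mat_ring\<^esub> b \<otimes>\<^bsub>Zloc2_mat_ring\<^esub> c = \<zero>\<^bsub>Zloc2_mat_ring\<^esub> \<and>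
     b \<otimes>\<^bsub>Zloc2_mat_ring\<^esub> a \<otimes>\<^bsub>Zloc2_mat_ring\<^esub> c \<notin> nilpotents Zloc2_mat_ring"
proof -
  let ?a = "(0, 1, 0, 0) :: mat2" and ?b = "(2, 0, 0, 0) :: mat2" and ?c = "(0, 0, 2, 0) :: mat2"
  have pow: "(4, 0, 0, 0) [^]\<^bsub>Zloc2_mat_ring\<^esub> n = (4 ^ n, 0, 0, if n = 0 then 1 else 0)" for n :: nat
    by (induction n) (simp_all add: Zloc2_mat_ring_simps)
  have "?a \<in> carrier Zloc2_mat_ring" "?b \<in> carrier Zloc2_mat_ring" "?c \<in> carrier Zloc2_mat_ring"
    using Zloc2_of_int[of 2]
    by (simp_all add: Zloc2_mat_ring_simps Zloc2_mats_iff zero_in_Zloc2 one_in_Zloc2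
        zero_in_two_Zloc2 two_in_two_Zloc2)
  moreover have "?a \<otimes>\<^bsub>Zloc2_mat_ring\<^esub> ?b \<otimes>\<^bsub>Zloc2_mat_ring\<^esub> ?c = \<zero>\<^bsub>Zloc2_mat_ring\<^esub>"
    by (simp add: Zloc2_mat_ring_simps)
  moreover have "?b \<otimes>\<^bsub>Zloc2_mat_ring\<^esub> ?a \<otimes>\<^bsub>Zloc2_mat_ring\<^esub> ?c \<notin> nilpotents Zloc2_mat_ring"
  proof -
    have "?b \<otimes>\<^bsub>Zloc2_mat_ring\<^esub> ?a \<otimes>\<^bsub>Zloc2_mat_ring\<^esub> ?c = (4, 0, 0, 0)"
      by (simp add: Zloc2_mat_ring_simps)
    then show ?thesis unfolding nilpotents_def by (simp add: pow Zloc2_mat_ring_simps(5))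
  qed
  ultimately show ?thesis by blast
qed

theorem theorem2p29:
  shows "\<exists>R :: nat ring. ring R \<and> NJ_symmetric R \<and> \<not> NJ_symmetric (UP R)"
proof (intro exI conjI)
  let ?R = "image_ring to_nat Zloc2_mat_ring"
  have inj: "inj_on to_nat (carrier Zloc2_mat_ring)" by (rule inj_on_subset[OF inj_to_nat]) simp
  have iso: "to_nat \<in> ring_iso Zloc2_mat_ring ?R" using inj by (rule inj_imp_image_ring_iso)
  show ring: "ring ?R" using inj by (rule ring.inj_imp_image_ring_is_ring[OF ring_Zloc2_mat_ring])
  have "local_ring ?R"
    by (rule ring_iso_local_ring[OF ring_Zloc2_mat_ring ring iso local_ring_Zloc2_mat_ring])
  then show "NJ_symmetric ?R" by (rule ring.local_ring_NJ_symmetric[OF ring])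
  obtain a b c
    where abc: "a \<in> carrier Zloc2_mat_ring" "b \<in> carrier Zloc2_mat_ring" "c \<in> carrier Zloc2_mat_ring"
    "a \<otimes>\<^bsub>Zloc2_mat_ring\<^esub> b \<otimes>\<^bsub>Zloc2_mat_ring\<^esub> c = \<zero>\<^bsub>Zloc2_mat_ring\<^esub>"
    "b \<otimes>\<^bsub>Zloc2_mat_ring\<^esub> a \<otimes>\<^bsub>Zloc2_mat_ring\<^esub> c \<notin> nilpotents Zloc2_mat_ring"
    using Zloc2_mat_ring_zero_product_witness by blast
  interpret UP_ring ?R "UP ?R" by (rule UP_ring.intro[OF ring])
  show "\<not> NJ_symmetric (UP ?R)"
    using ring_iso_zero_product_witness[OF ring_Zloc2_mat_ring ring iso abc]
      abc(1-3) ring_iso_memE(1)[OF iso]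
    by (intro UP_not_NJ_symmetric) auto
qed

end
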